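(* In the notation below, suppose $0<d_n\le1$ for all $n$ and $d_n\ge C|n|^{-\zeta}$ for all $n\neq0$, for some constants $C>0$ and $\zeta<\tfrac12$. Then for every sufficiently small $C_0>0$ there exists $\gamma'>0$ such that for all integers $s\ge1$, $$A(s):=\Big(\frac{15}{16}+\frac1{16}\sup_{|k|\ge t_sC_0/\|a\|_\infty}|\hat r(k)|^2\Big)^{1/2}\le\exp\!\big(-\gamma'|s|^{-2\zeta}\big),$$ where $t_s=\min(d_{2s-1},d_{2s})$.
   Context: $r:\mathbb R\to[0,\infty)$ is bounded, measurable, compactly supported, with $\int r=1$; $\hat r(k)=\int_{\mathbb R}e^{-2\pi ikx}r(x)\,dx$. $(a_n)_{n\in\mathbb Z}$ is a bounded real sequence with $a_n\ge\delta>0$ and $\|a\|_\infty=\sup_n a_n$. *)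

theory Defs
  imports "HOL-Analysis.Analysis"
begin

definition fourier_hat :: "(real \<Rightarrow> real) \<Rightarrow> real \<Rightarrow> complex" where
  "fourier_hat r k = (LINT x|lborel. cis (- 2 * pi * k * x) * complex_of_real (r x))"

definition sup_norm_seq :: "(int \<Rightarrow> real) \<Rightarrow> real" where
  "sup_norm_seq a = (SUP n. a n)"

definition A_quant :: "(real \<Rightarrow> real) \<Rightarrow> (int \<Rightarrow> real) \<Rightarrow> (int \<Rightarrow> real) \<Rightarrow> real \<Rightarrow> int \<Rightarrow> real" where
  "A_quant r a d C0 s =
     (let T = min (d (2 * s - 1)) (d (2 * s)) * C0 / sup_norm_seq a in
      sqrt (15/16 + 1/16 * Sup ((\<lambda>k. (cmod (fourier_hat r k))^2) ` {k. \<bar>k\<bar> \<ge> T})))"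

end

theory Submission
  imports Defs
begin

text \<open>Rotating by a phase \<open>\<beta>\<close> makes the Fourier integral real:
\<open>1 - |fourier_hat r k| = \<integral> r(x) (1 - cos (\<beta> - 2\<pi>kx)) dx\<close>. On \<open>[-R, R]\<close> the phase lies within \<open>\<delta>\<close>
of \<open>2\<pi>\<int>\<close> only on \<open>O(|k|R + 1)\<close> intervals of length \<open>\<delta>/(\<pi>|k|)\<close>, which carry little mass
because \<open>r \<le> B\<close>; everywhere else the integrand is at least \<open>(1 - cos \<delta>) r(x)\<close>. Choosing
\<open>\<delta> \<sim> min |k| 1\<close> gives \<open>|fourier_hat r k| \<le> 1 - \<kappa> min(k\<^sup>2, 1)\<close>. With the threshold
\<open>T \<ge> const \<cdot> s\<^sup>-\<^sup>\<zeta>\<close> coming from the decay of \<open>d\<close>, this yields \<open>A(s) \<le> sqrt (1 - \<kappa>T\<^sup>2/16) \<le> exp (-\<kappa>T\<^sup>2/32)\<close>.\<close>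

lemma sin_ge_half_self:
  fixes x :: real
  assumes "0 \<le> x" "x \<le> 1"
  shows "x / 2 \<le> sin x"
proof -
  have cos_ge: "1 / 2 \<le> cos u" if "0 \<le> u" "u \<le> x" for u :: real
  proof -
    have "cos (pi / 3) \<le> cos u"
      using that assms pi_gt3 by (intro cos_monotone_0_pi_le) auto
    then show ?thesis by (simp add: cos_60)
  qed
  have "\<And>u. 0 \<le> u \<Longrightarrow> u \<le> x \<Longrightarrow> ((\<lambda>x. sin x - x / 2) has_real_derivative cos u - 1 / 2) (at u)"
    by (auto intro!: derivative_eq_intros)
  then have "sin 0 - 0 / 2 \<le> sin x - x / 2"
    using cos_ge by (intro DERIV_nonneg_imp_nondecreasing[OF assms(1)]) force
  then show ?thesis by simp
qed

lemma cos_le_one_minus_square_quarter: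
  fixes x :: real
  assumes "0 \<le> x" "x \<le> 1"
  shows "cos x \<le> 1 - x\<^sup>2 / 4"
proof -
  have "\<And>u. 0 \<le> u \<Longrightarrow> u \<le> x \<Longrightarrow>
      ((\<lambda>x. 1 - x\<^sup>2 / 4 - cos x) has_real_derivative sin u - u / 2) (at u)"
    by (auto intro!: derivative_eq_intros simp: power2_eq_square)
  then have "1 - 0\<^sup>2 / 4 - cos 0 \<le> 1 - x\<^sup>2 / 4 - cos x"
    using sin_ge_half_self assms by (intro DERIV_nonneg_imp_nondecreasing[OF assms(1)]) force
  then show ?thesis by simp
qed

lemma sqrt_one_minus_le_exp: "sqrt (1 - y) \<le> exp (- y / 2)"
proof -
  have "sqrt (1 - y) \<le> sqrt (exp (- y))"
    using exp_ge_add_one_self[of "- y"] by (intro real_sqrt_le_mono) simp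
  also have "\<dots> = exp (- y / 2)"
    by (rule real_sqrt_unique) (simp_all add: power2_eq_square exp_add[symmetric])
  finally show ?thesis .
qed

lemma near_multiple_of_2pi_if_cos_gt:
  fixes t \<delta> :: real
  assumes "0 \<le> \<delta>" "\<delta> \<le> pi" "cos \<delta> < cos t"
  obtains n :: int where "\<bar>t - 2 * pi * n\<bar> < \<delta>"
proof -
  define n where "n = round (t / (2 * pi))"
  have "\<bar>t / (2 * pi) - n\<bar> \<le> 1 / 2"
    unfolding n_def using of_int_round_abs_le[of "t / (2 * pi)"] by (simp add: abs_minus_commute)
  moreover have "t - 2 * pi * n = 2 * pi * (t / (2 * pi) - n)"
    by (simp add: field_simps)
  ultimately have "\<bar>t - 2 * pi * n\<bar> \<le> pi"
    by (simp add: abs_mult)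
  moreover have "cos (t - 2 * pi * n) = cos t"
    by (simp add: cos_diff sin_diff)
  ultimately have "\<not> \<delta> \<le> \<bar>t - 2 * pi * n\<bar>"
    using assms cos_monotone_0_pi_le[of \<delta> "\<bar>t - 2 * pi * n\<bar>"] by auto
  then show ?thesis using that by (meson not_le)
qed

lemma integral_mult_ge_outside_small_set:
  fixes r g :: "'a \<Rightarrow> real"
  assumes r_int: "integrable M r" and rg_int: "integrable M (\<lambda>x. r x * g x)"
    and E: "E \<in> sets M" "emeasure M E < \<infinity>"
    and \<eta>: "0 \<le> \<eta>" and r_nonneg: "\<And>x. 0 \<le> r x" and r_le: "\<And>x. r x \<le> B"
    and g_nonneg: "\<And>x. 0 \<le> g x" and g_ge: "\<And>x. x \<notin> E \<Longrightarrow> r x \<noteq> 0 \<Longrightarrow> \<eta> \<le> g x"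
  shows "\<eta> * (integral\<^sup>L M r - B * measure M E) \<le> integral\<^sup>L M (\<lambda>x. r x * g x)"
proof -
  have pointwise: "\<eta> * r x - \<eta> * B * indicator E x \<le> r x * g x" for x
  proof (cases "x \<in> E \<or> r x = 0")
    case True
    have "0 \<le> r x * g x" "\<eta> * r x \<le> \<eta> * B"
      using \<eta> r_nonneg[of x] g_nonneg[of x] r_le[of x] by (simp_all add: mult_left_mono)
    with True show ?thesis by (auto simp: indicator_def)
  next
    case False
    then show ?thesis
      using g_ge[of x] r_nonneg[of x] mult_right_mono[of \<eta> "g x" "r x"] by (auto simp: mult.commute)
  qed
  have "integral\<^sup>L M (\<lambda>x. \<eta> * r x - \<eta> * B * indicator E x) \<le> integral\<^sup>L M (\<lambda>x. r x * g x)"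
    using r_int rg_int E pointwise by (intro integral_mono) auto
  then show ?thesis
    using r_int E by (simp add: algebra_simps sets.Int_space_eq2)
qed

lemma cos_linear_gt_imp_near_zero:
  fixes k \<beta> \<delta> R x :: real
  assumes k: "k \<noteq> 0" and \<delta>: "0 < \<delta>" "\<delta> \<le> pi"
    and x: "\<bar>x\<bar> \<le> R" "cos \<delta> < cos (\<beta> - 2 * pi * k * x)"
  obtains n :: int
  where "(\<beta> - 2 * pi * \<bar>k\<bar> * R - \<delta>) / (2 * pi) \<le> n" "n \<le> (\<beta> + 2 * pi * \<bar>k\<bar> * R + \<delta>) / (2 * pi)"
    and "\<bar>x - (\<beta> - 2 * pi * n) / (2 * pi * k)\<bar> \<le> \<delta> / (2 * pi * \<bar>k\<bar>)"
proof -
  obtain n :: int where n: "\<bar>\<beta> - 2 * pi * k * x - 2 * pi * n\<bar> < \<delta>"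
    using near_multiple_of_2pi_if_cos_gt[OF _ \<delta>(2) x(2)] \<delta>(1) by auto
  have "\<bar>k * x\<bar> \<le> \<bar>k\<bar> * R" using x(1) by (simp add: abs_mult mult_left_mono)
  then have "\<bar>2 * pi * k * x\<bar> \<le> 2 * pi * \<bar>k\<bar> * R" by (simp add: abs_mult)
  with n have "\<beta> - 2 * pi * \<bar>k\<bar> * R - \<delta> \<le> 2 * pi * n" "2 * pi * n \<le> \<beta> + 2 * pi * \<bar>k\<bar> * R + \<delta>"
    by (simp_all only: abs_le_iff abs_less_iff) linarith+
  then have range: "(\<beta> - 2 * pi * \<bar>k\<bar> * R - \<delta>) / (2 * pi) \<le> n" "n \<le> (\<beta> + 2 * pi * \<bar>k\<bar> * R + \<delta>) / (2 * pi)"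
    by (simp_all add: pos_divide_le_eq pos_le_divide_eq mult.commute)
  define m where "m = (\<beta> - 2 * pi * n) / (2 * pi * k)"
  have "\<bar>x - m\<bar> * (2 * pi * \<bar>k\<bar>) = \<bar>2 * pi * k * (m - x)\<bar>"
    by (simp add: abs_mult abs_minus_commute)
  also have "2 * pi * k * (m - x) = \<beta> - 2 * pi * k * x - 2 * pi * n"
    unfolding m_def using k by (simp add: field_simps)
  finally have "\<bar>x - m\<bar> * (2 * pi * \<bar>k\<bar>) < \<delta>"
    using n by simp
  then have "\<bar>x - m\<bar> \<le> \<delta> / (2 * pi * \<bar>k\<bar>)"
    using k by (simp add: pos_le_divide_eq)
  with range show ?thesis
    using that unfolding m_def by blast
qed

lemma card_integer_interval_le: "real (card {\<lceil>lo\<rceil>..\<lfloor>hi\<rfloor>}) \<le> max 0 (hi - lo + 1)"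
proof -
  have "real (card {\<lceil>lo\<rceil>..\<lfloor>hi\<rfloor>}) \<le> max 0 (real_of_int (\<lfloor>hi\<rfloor> - \<lceil>lo\<rceil> + 1))"
    by simp
  moreover have "real_of_int \<lfloor>hi\<rfloor> \<le> hi" "lo \<le> real_of_int \<lceil>lo\<rceil>"
    by simp_all
  ultimately show ?thesis
    by linarith
qed

lemma measure_cos_linear_gt_le:
  fixes k \<beta> \<delta> R :: real
  assumes k: "k \<noteq> 0" and \<delta>: "0 < \<delta>" "\<delta> \<le> pi" and R: "0 \<le> R"
  shows "measure lborel {x. \<bar>x\<bar> \<le> R \<and> cos \<delta> < cos (\<beta> - 2 * pi * k * x)}
           \<le> (2 * \<bar>k\<bar> * R + 2) * (\<delta> / (pi * \<bar>k\<bar>))"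
proof -
  define w where "w = \<delta> / (2 * pi * \<bar>k\<bar>)"
  define m where "m n = (\<beta> - 2 * pi * n) / (2 * pi * k)" for n :: int
  define lo where "lo = (\<beta> - 2 * pi * \<bar>k\<bar> * R - \<delta>) / (2 * pi)"
  define hi where "hi = (\<beta> + 2 * pi * \<bar>k\<bar> * R + \<delta>) / (2 * pi)"
  define N where "N = {\<lceil>lo\<rceil>..\<lfloor>hi\<rfloor>}"
  define U where "U = (\<Union>n\<in>N. {m n - w .. m n + w})"
  have "{x. \<bar>x\<bar> \<le> R \<and> cos \<delta> < cos (\<beta> - 2 * pi * k * x)} \<subseteq> U"
  proof safe
    fix x assume "\<bar>x\<bar> \<le> R" "cos \<delta> < cos (\<beta> - 2 * pi * k * x)"
    then obtain n :: int where "lo \<le> n" "n \<le> hi" and near: "\<bar>x - m n\<bar> \<le> w"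
      using cos_linear_gt_imp_near_zero[OF k \<delta>] unfolding lo_def hi_def m_def w_def by blast
    then have "n \<in> N"
      unfolding N_def by (simp add: ceiling_le le_floor_iff)
    with near show "x \<in> U"
      unfolding U_def by (force simp: abs_le_iff)
  qed
  moreover have "U \<in> fmeasurable lborel"
    unfolding U_def N_def by (intro fmeasurableI emeasure_bounded_finite) auto
  ultimately have "measure lborel {x. \<bar>x\<bar> \<le> R \<and> cos \<delta> < cos (\<beta> - 2 * pi * k * x)} \<le> measure lborel U"
    by (intro measure_mono_fmeasurable) auto
  also have "\<dots> \<le> (\<Sum>n\<in>N. measure lborel {m n - w .. m n + w})"
    unfolding U_def N_def by (intro measure_UNION_le) auto
  also have "\<dots> = card N * (2 * w)"
    using \<delta> k unfolding w_def by simp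
  also have "\<dots> \<le> (2 * \<bar>k\<bar> * R + 2) * (\<delta> / (pi * \<bar>k\<bar>))"
  proof -
    have "hi - lo = 2 * \<bar>k\<bar> * R + \<delta> / pi"
      unfolding hi_def lo_def by (simp add: field_simps)
    moreover have "\<delta> / pi \<le> 1" "0 \<le> \<bar>k\<bar> * R"
      using \<delta> R by simp_all
    ultimately have "real (card N) \<le> 2 * \<bar>k\<bar> * R + 2"
      using card_integer_interval_le[of lo hi] unfolding N_def by linarith
    moreover have "2 * w = \<delta> / (pi * \<bar>k\<bar>)" "0 \<le> \<delta> / (pi * \<bar>k\<bar>)"
      unfolding w_def using \<delta> by simp_all
    ultimately show ?thesis
      by (metis mult_right_mono)
  qed
  finally show ?thesis .
qed

lemma norm_fourier_hat_eq_integral_cos: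
  fixes r :: "real \<Rightarrow> real" and k :: real
  assumes r_int: "integrable lborel r"
  obtains \<beta> where "integrable lborel (\<lambda>x. r x * cos (\<beta> - 2 * pi * k * x))"
    and "cmod (fourier_hat r k) = (LINT x|lborel. r x * cos (\<beta> - 2 * pi * k * x))"
proof -
  define F where "F x = cis (- 2 * pi * k * x) * complex_of_real (r x)" for x
  define \<beta> where "\<beta> = - Arg (fourier_hat r k)"
  have "r \<in> borel_measurable lborel"
    using r_int by (rule borel_measurable_integrable)
  moreover have "(\<lambda>x::real. cis (- 2 * pi * k * x)) \<in> borel_measurable borel"
    by (intro borel_measurable_continuous_onI continuous_intros)
  ultimately have "F \<in> borel_measurable lborel"
    unfolding F_def by (intro borel_measurable_times) auto
  moreover have "AE x in lborel. norm (F x) \<le> norm (r x)"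
    by (simp add: F_def norm_mult)
  ultimately have F_int: "integrable lborel F"
    using Bochner_Integration.integrable_bound[OF r_int] by blast
  have rotate: "Re (cis \<beta> * F x) = r x * cos (\<beta> - 2 * pi * k * x)" for x
    by (simp add: F_def cis_mult cos_diff algebra_simps)
  have Re_cis: "bounded_linear (\<lambda>w. Re (cis \<beta> * w))"
    by (rule bounded_linear_compose[OF bounded_linear_Re bounded_linear_mult_right])
  have "cis \<beta> * fourier_hat r k = complex_of_real (cmod (fourier_hat r k))"
    unfolding \<beta>_def by (subst (2) rcis_cmod_Arg[symmetric]) (simp add: rcis_def cis_mult mult.left_commute)
  then have "cmod (fourier_hat r k) = Re (cis \<beta> * fourier_hat r k)"
    by simp
  also have "\<dots> = Re (cis \<beta> * integral\<^sup>L lborel F)"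
    unfolding fourier_hat_def F_def ..
  also have "\<dots> = (LINT x|lborel. Re (cis \<beta> * F x))"
    by (rule integral_bounded_linear[OF Re_cis F_int, symmetric])
  finally show ?thesis
    using that integrable_bounded_linear[OF Re_cis F_int] unfolding rotate by blast
qed

lemma one_minus_norm_fourier_hat_ge:
  fixes r :: "real \<Rightarrow> real" and k \<delta> B R :: real
  assumes r_nonneg: "\<And>x. 0 \<le> r x"
    and r_le: "\<And>x. r x \<le> B" and r_supp: "\<And>x. R < \<bar>x\<bar> \<Longrightarrow> r x = 0"
    and r_int: "integral\<^sup>L lborel r = 1" and R: "0 \<le> R"
    and k: "k \<noteq> 0" and \<delta>: "0 < \<delta>" "\<delta> \<le> pi"
  shows "(1 - cos \<delta>) * (1 - B * ((2 * \<bar>k\<bar> * R + 2) * (\<delta> / (pi * \<bar>k\<bar>))))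
           \<le> 1 - cmod (fourier_hat r k)"
proof -
  have r_integrable: "integrable lborel r"
    using r_int not_integrable_integral_eq by fastforce
  obtain \<beta> where rc_int: "integrable lborel (\<lambda>x. r x * cos (\<beta> - 2 * pi * k * x))"
    and norm_eq: "cmod (fourier_hat r k) = (LINT x|lborel. r x * cos (\<beta> - 2 * pi * k * x))"
    using norm_fourier_hat_eq_integral_cos[OF r_integrable] by blast
  define E where "E = {x. \<bar>x\<bar> \<le> R \<and> cos \<delta> < cos (\<beta> - 2 * pi * k * x)}"
  have E_sets: "E \<in> sets lborel"
    unfolding E_def by measurable
  have "bounded E"
    unfolding E_def bounded_iff by auto
  then have E_finite: "emeasure lborel E < \<infinity>"
    by (rule emeasure_bounded_finite)
  have "0 \<le> B" using r_nonneg r_le order_trans by blast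
  have one_minus_cos_int: "integrable lborel (\<lambda>x. r x * (1 - cos (\<beta> - 2 * pi * k * x)))"
    using r_integrable rc_int by (simp add: right_diff_distrib)
  have off_E: "1 - cos \<delta> \<le> 1 - cos (\<beta> - 2 * pi * k * x)" if "x \<notin> E" "r x \<noteq> 0" for x
    using that r_supp[of x] unfolding E_def by fastforce
  have "(1 - cos \<delta>) * (1 - B * measure lborel E)
      \<le> (LINT x|lborel. r x * (1 - cos (\<beta> - 2 * pi * k * x)))"
    using integral_mult_ge_outside_small_set[OF r_integrable one_minus_cos_int E_sets E_finite _
        r_nonneg r_le _ off_E] r_int by simp
  also have "\<dots> = 1 - cmod (fourier_hat r k)"
    using r_integrable rc_int r_int norm_eq by (simp add: right_diff_distrib)
  finally have "(1 - cos \<delta>) * (1 - B * measure lborel E) \<le> 1 - cmod (fourier_hat r k)" .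
  moreover have "B * measure lborel E \<le> B * ((2 * \<bar>k\<bar> * R + 2) * (\<delta> / (pi * \<bar>k\<bar>)))"
    unfolding E_def using measure_cos_linear_gt_le[OF k \<delta> R] \<open>0 \<le> B\<close> by (rule mult_left_mono)
  then have "(1 - cos \<delta>) * (1 - B * ((2 * \<bar>k\<bar> * R + 2) * (\<delta> / (pi * \<bar>k\<bar>))))
      \<le> (1 - cos \<delta>) * (1 - B * measure lborel E)"
    by (intro mult_left_mono) auto
  ultimately show ?thesis
    by linarith
qed

lemma linear_times_min_ratio_le:
  fixes k R :: real
  assumes "k \<noteq> 0" "0 \<le> R"
  shows "(2 * \<bar>k\<bar> * R + 2) * (min \<bar>k\<bar> 1 / \<bar>k\<bar>) \<le> 2 * R + 2"
proof (cases "\<bar>k\<bar> \<le> 1")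
  case True
  then show ?thesis
    using assms mult_right_mono[of "\<bar>k\<bar>" 1 R] by simp
next
  case False
  then have "(2 * \<bar>k\<bar> * R + 2) * (min \<bar>k\<bar> 1 / \<bar>k\<bar>) = 2 * R + 2 / \<bar>k\<bar>"
    by (simp add: field_simps)
  also have "\<dots> \<le> 2 * R + 2"
    using False by (simp add: divide_le_eq)
  finally show ?thesis .
qed

lemma norm_fourier_hat_le_of_scale:
  fixes r :: "real \<Rightarrow> real" and B R c k :: real
  assumes r_nonneg: "\<And>x. 0 \<le> r x"
    and r_le: "\<And>x. r x \<le> B" and r_supp: "\<And>x. R < \<bar>x\<bar> \<Longrightarrow> r x = 0"
    and r_int: "integral\<^sup>L lborel r = 1" and R: "0 \<le> R"
    and c: "0 < c" "c \<le> 1" "B * (c * (2 * R + 2)) \<le> 1 / 2" and k: "k \<noteq> 0"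
  shows "cmod (fourier_hat r k) \<le> 1 - c\<^sup>2 / 8 * min (k\<^sup>2) 1"
proof -
  define \<delta> where "\<delta> = c * min \<bar>k\<bar> 1"
  have kpos: "0 < \<bar>k\<bar>" using k by simp
  have B: "0 \<le> B" using r_nonneg r_le order_trans by blast
  have \<delta>: "0 < \<delta>" "\<delta> \<le> 1"
    unfolding \<delta>_def using c kpos by (auto intro: mult_le_one)
  have "(2 * \<bar>k\<bar> * R + 2) * (\<delta> / \<bar>k\<bar>) = c * ((2 * \<bar>k\<bar> * R + 2) * (min \<bar>k\<bar> 1 / \<bar>k\<bar>))"
    unfolding \<delta>_def by simp
  also have "\<dots> \<le> c * (2 * R + 2)"
    using linear_times_min_ratio_le[OF k R] c(1) by (intro mult_left_mono) auto
  finally have "B * ((2 * \<bar>k\<bar> * R + 2) * (\<delta> / \<bar>k\<bar>)) \<le> B * (c * (2 * R + 2))"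
    using B by (intro mult_left_mono) auto
  moreover have "\<delta> / (pi * \<bar>k\<bar>) \<le> \<delta> / \<bar>k\<bar>"
    using \<delta> kpos pi_gt3 by (intro divide_left_mono) auto
  then have "B * ((2 * \<bar>k\<bar> * R + 2) * (\<delta> / (pi * \<bar>k\<bar>))) \<le> B * ((2 * \<bar>k\<bar> * R + 2) * (\<delta> / \<bar>k\<bar>))"
    using B R by (intro mult_left_mono) auto
  ultimately have "1 / 2 \<le> 1 - B * ((2 * \<bar>k\<bar> * R + 2) * (\<delta> / (pi * \<bar>k\<bar>)))"
    using c(3) by linarith
  moreover have "\<delta>\<^sup>2 / 4 \<le> 1 - cos \<delta>"
    using cos_le_one_minus_square_quarter[of \<delta>] \<delta> by simp
  ultimately have "\<delta>\<^sup>2 / 4 * (1 / 2) \<le> (1 - cos \<delta>) * (1 - B * ((2 * \<bar>k\<bar> * R + 2) * (\<delta> / (pi * \<bar>k\<bar>))))"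
    by (intro mult_mono) auto
  also have "\<dots> \<le> 1 - cmod (fourier_hat r k)"
    using \<delta> pi_gt3 by (intro one_minus_norm_fourier_hat_ge[OF r_nonneg r_le r_supp r_int R k]) auto
  finally show ?thesis
    unfolding \<delta>_def by (auto simp: power_mult_distrib min_def abs_square_le_1)
qed

lemma norm_fourier_hat_le_one_minus:
  fixes r :: "real \<Rightarrow> real" and B R :: real
  assumes r_nonneg: "\<And>x. 0 \<le> r x"
    and r_le: "\<And>x. r x \<le> B" and r_supp: "\<And>x. R < \<bar>x\<bar> \<Longrightarrow> r x = 0"
    and r_int: "integral\<^sup>L lborel r = 1"
  obtains \<kappa> where "0 < \<kappa>" "\<And>k. k \<noteq> 0 \<Longrightarrow> cmod (fourier_hat r k) \<le> 1 - \<kappa> * min (k\<^sup>2) 1"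
proof -
  define B' where "B' = max B 1"
  define R' where "R' = max R 0"
  have B': "1 \<le> B'" "\<And>x. r x \<le> B'" and R': "0 \<le> R'" "\<And>x. R' < \<bar>x\<bar> \<Longrightarrow> r x = 0"
    using r_le r_supp unfolding B'_def R'_def by (auto intro: max.coboundedI1)
  define c where "c = 1 / (2 * B' * (2 * R' + 2))"
  have "0 \<le> B' * R'" using B'(1) R'(1) by simp
  then have "1 \<le> 2 * B' * (2 * R' + 2)" using B'(1) by (simp add: algebra_simps)
  then have c: "0 < c" "c \<le> 1" "B' * (c * (2 * R' + 2)) \<le> 1 / 2"
    unfolding c_def using B'(1) R'(1) by simp_all
  show ?thesis
    using that[of "c\<^sup>2 / 8"] c(1)
      norm_fourier_hat_le_of_scale[OF r_nonneg B'(2) R'(2) r_int R'(1) c] by simp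
qed

lemma Sup_norm_fourier_hat_sq_le:
  fixes r :: "real \<Rightarrow> real"
  assumes \<kappa>: "0 \<le> \<kappa>" and bound: "\<And>k. k \<noteq> 0 \<Longrightarrow> cmod (fourier_hat r k) \<le> 1 - \<kappa> * min (k\<^sup>2) 1"
    and T: "0 < T" "T \<le> 1"
  shows "Sup ((\<lambda>k. (cmod (fourier_hat r k))\<^sup>2) ` {k. T \<le> \<bar>k\<bar>}) \<le> 1 - \<kappa> * T\<^sup>2"
proof (rule cSup_least)
  show "(\<lambda>k. (cmod (fourier_hat r k))\<^sup>2) ` {k. T \<le> \<bar>k\<bar>} \<noteq> {}"
    using T by (auto intro!: exI[of _ T])
next
  have T_sq: "min (T\<^sup>2) 1 = T\<^sup>2"
    using T by (simp add: power_le_one)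
  have "0 \<le> 1 - \<kappa> * T\<^sup>2"
    using bound[of T] T T_sq norm_ge_zero[of "fourier_hat r T"] by linarith
  fix v assume "v \<in> (\<lambda>k. (cmod (fourier_hat r k))\<^sup>2) ` {k. T \<le> \<bar>k\<bar>}"
  then obtain k where k: "T \<le> \<bar>k\<bar>" and v: "v = (cmod (fourier_hat r k))\<^sup>2" by blast
  have "T\<^sup>2 \<le> min (k\<^sup>2) 1"
    using k T T_sq by (metis abs_le_square_iff abs_of_pos min.mono order.refl)
  moreover have "k \<noteq> 0" using k T by auto
  ultimately have "cmod (fourier_hat r k) \<le> 1 - \<kappa> * T\<^sup>2"
    using bound[of k] \<kappa> mult_left_mono[of "T\<^sup>2" "min (k\<^sup>2) 1" \<kappa>] by linarith
  then have "v \<le> (1 - \<kappa> * T\<^sup>2)\<^sup>2"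
    unfolding v by (intro power_mono) auto
  also have "\<dots> \<le> 1 - \<kappa> * T\<^sup>2"
    using \<open>0 \<le> 1 - \<kappa> * T\<^sup>2\<close> \<kappa> by (simp add: power2_eq_square mult_left_le_one_le)
  finally show "v \<le> 1 - \<kappa> * T\<^sup>2" .
qed

lemma A_quant_le_exp:
  assumes \<kappa>: "0 \<le> \<kappa>" and bound: "\<And>k. k \<noteq> 0 \<Longrightarrow> cmod (fourier_hat r k) \<le> 1 - \<kappa> * min (k\<^sup>2) 1"
    and T_def: "T = min (d (2 * s - 1)) (d (2 * s)) * C0 / sup_norm_seq a"
    and T: "0 < T" "T \<le> 1"
  shows "A_quant r a d C0 s \<le> exp (- (\<kappa> * T\<^sup>2 / 32))"
proof -
  have "A_quant r a d C0 s \<le> sqrt (1 - \<kappa> * T\<^sup>2 / 16)"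
    unfolding A_quant_def Let_def T_def[symmetric]
    using Sup_norm_fourier_hat_sq_le[OF \<kappa> bound T] by simp
  also have "\<dots> \<le> exp (- (\<kappa> * T\<^sup>2 / 32))"
    using sqrt_one_minus_le_exp[of "\<kappa> * T\<^sup>2 / 16"] by simp
  finally show ?thesis .
qed

lemma decay_exponent_nonneg:
  fixes C \<zeta> :: real
  assumes C: "0 < C" and le1: "\<And>n::int. n \<noteq> 0 \<Longrightarrow> C * \<bar>real_of_int n\<bar> powr (- \<zeta>) \<le> 1"
  shows "0 \<le> \<zeta>"
proof (rule ccontr)
  assume "\<not> 0 \<le> \<zeta>"
  then have \<zeta>: "0 < - \<zeta>" by simp
  define y where "y = (1 / C) powr (1 / (- \<zeta>))"
  define n where "n = \<lceil>y\<rceil> + 1"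
  have "0 \<le> y" "y < real_of_int n"
    unfolding n_def by (simp_all add: y_def, linarith)
  then have "n \<noteq> 0" "y powr (- \<zeta>) < \<bar>real_of_int n\<bar> powr (- \<zeta>)"
    using \<zeta> by (auto intro: powr_less_mono2)
  moreover have "y powr (- \<zeta>) = 1 / C"
    unfolding y_def using \<zeta> C by (simp add: powr_powr)
  ultimately show False
    using le1[of n] C by (simp add: field_simps)
qed

lemma consecutive_min_ge_decay:
  fixes d :: "int \<Rightarrow> real" and C \<zeta> :: real and s :: int
  assumes d_lower: "\<And>n. n \<noteq> 0 \<Longrightarrow> C * \<bar>real_of_int n\<bar> powr (- \<zeta>) \<le> d n"
    and C: "0 \<le> C" and \<zeta>: "0 \<le> \<zeta>" and s: "1 \<le> s"
  shows "C * (2 * real_of_int s) powr (- \<zeta>) \<le> min (d (2 * s - 1)) (d (2 * s))"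
proof -
  have "C * (2 * real_of_int s) powr (- \<zeta>) \<le> C * real_of_int (2 * s - 1) powr (- \<zeta>)"
    using C \<zeta> s by (intro mult_left_mono powr_mono2') auto
  also have "\<dots> \<le> d (2 * s - 1)"
    using d_lower[of "2 * s - 1"] s by simp
  finally show ?thesis
    using d_lower[of "2 * s"] s by simp
qed

lemma power2_powr_two_times:
  fixes x \<zeta> :: real
  assumes "0 < x"
  shows "((2 * x) powr (- \<zeta>))\<^sup>2 = 2 powr (- 2 * \<zeta>) * x powr (- 2 * \<zeta>)"
proof -
  have "((2 * x) powr (- \<zeta>))\<^sup>2 = (2 * x) powr (- 2 * \<zeta>)"
    by (simp add: power2_eq_square powr_add[symmetric])
  also have "\<dots> = 2 powr (- 2 * \<zeta>) * x powr (- 2 * \<zeta>)"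
    using assms by (simp add: powr_mult)
  finally show ?thesis .
qed

lemma A_quant_le_exp_decay:
  fixes r :: "real \<Rightarrow> real" and a d :: "int \<Rightarrow> real" and \<kappa> C \<zeta> C0 :: real and s :: int
  assumes \<kappa>: "0 \<le> \<kappa>" and bound: "\<And>k. k \<noteq> 0 \<Longrightarrow> cmod (fourier_hat r k) \<le> 1 - \<kappa> * min (k\<^sup>2) 1"
    and d_pos: "\<And>n. 0 < d n" and d_le1: "\<And>n. d n \<le> 1"
    and d_lower: "\<And>n. n \<noteq> 0 \<Longrightarrow> C * \<bar>real_of_int n\<bar> powr (- \<zeta>) \<le> d n"
    and C: "0 \<le> C" and \<zeta>: "0 \<le> \<zeta>" and C0: "0 < C0" "C0 \<le> sup_norm_seq a" and s: "1 \<le> s"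
  shows "A_quant r a d C0 s
           \<le> exp (- (\<kappa> / 32 * (C * C0 / sup_norm_seq a)\<^sup>2 * 2 powr (- 2 * \<zeta>)) * \<bar>real_of_int s\<bar> powr (- 2 * \<zeta>))"
proof -
  define M where "M = sup_norm_seq a"
  define T where "T = min (d (2 * s - 1)) (d (2 * s)) * C0 / M"
  have M: "0 < M" using C0 unfolding M_def by linarith
  have "min (d (2 * s - 1)) (d (2 * s)) * C0 \<le> C0"
    using d_pos d_le1 C0 by (intro mult_left_le_one_le) (auto simp: min_le_iff_disj less_imp_le)
  then have "T \<le> C0 / M"
    unfolding T_def using M by (intro divide_right_mono) auto
  moreover have "C0 / M \<le> 1"
    using C0 M by (simp add: M_def)
  moreover have "0 < T"
    unfolding T_def using d_pos C0 M by simp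
  ultimately have T: "0 < T" "T \<le> 1"
    by linarith+
  have "C * (2 * real_of_int s) powr (- \<zeta>) * C0 / M \<le> T"
    unfolding T_def using consecutive_min_ge_decay[OF d_lower C \<zeta> s] C0 M
    by (intro divide_right_mono mult_right_mono) auto
  then have "(C * (2 * real_of_int s) powr (- \<zeta>) * C0 / M)\<^sup>2 \<le> T\<^sup>2"
    using C C0 M by (intro power_mono) auto
  moreover have "(C * (2 * real_of_int s) powr (- \<zeta>) * C0 / M)\<^sup>2
      = (C * C0 / M)\<^sup>2 * 2 powr (- 2 * \<zeta>) * \<bar>real_of_int s\<bar> powr (- 2 * \<zeta>)"
    using power2_powr_two_times[of "real_of_int s" \<zeta>] s by (simp add: power_mult_distrib power_divide)
  ultimately have "(C * C0 / M)\<^sup>2 * 2 powr (- 2 * \<zeta>) * \<bar>real_of_int s\<bar> powr (- 2 * \<zeta>) \<le> T\<^sup>2"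
    by simp
  then have "\<kappa> / 32 * ((C * C0 / M)\<^sup>2 * 2 powr (- 2 * \<zeta>) * \<bar>real_of_int s\<bar> powr (- 2 * \<zeta>))
      \<le> \<kappa> / 32 * T\<^sup>2"
    using \<kappa> by (intro mult_left_mono) auto
  then have "exp (- (\<kappa> * T\<^sup>2 / 32))
      \<le> exp (- (\<kappa> / 32 * (C * C0 / M)\<^sup>2 * 2 powr (- 2 * \<zeta>)) * \<bar>real_of_int s\<bar> powr (- 2 * \<zeta>))"
    by (simp add: mult_ac)
  with A_quant_le_exp[OF \<kappa> bound T_def[unfolded M_def] T] show ?thesis
    unfolding M_def by linarith
qed

theorem lemma4p9:
  fixes r :: "real \<Rightarrow> real" and a d :: "int \<Rightarrow> real" and \<delta> C \<zeta> :: real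
  assumes r_meas: "r \<in> borel_measurable lborel"
    and r_nonneg: "\<And>x. r x \<ge> 0"
    and r_bdd: "\<exists>B. \<forall>x. r x \<le> B"
    and r_supp: "\<exists>R. \<forall>x. \<bar>x\<bar> > R \<longrightarrow> r x = 0"
    and r_int: "integral\<^sup>L lborel r = 1"
    and a_bdd: "bdd_above (range a)"
    and \<delta>_pos: "\<delta> > 0"
    and a_ge: "\<And>n. a n \<ge> \<delta>"
    and d_pos: "\<And>n. 0 < d n" and d_le1: "\<And>n. d n \<le> 1"
    and C_pos: "C > 0" and \<zeta>_lt: "\<zeta> < 1/2"
    and d_lower: "\<And>n. n \<noteq> 0 \<Longrightarrow> d n \<ge> C * \<bar>real_of_int n\<bar> powr (- \<zeta>)"
  shows "\<exists>c>0. \<forall>C0. 0 < C0 \<and> C0 < c \<longrightarrow>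
           (\<exists>\<gamma>'>0. \<forall>s::int. s \<ge> 1 \<longrightarrow>
              A_quant r a d C0 s \<le> exp (- \<gamma>' * \<bar>real_of_int s\<bar> powr (- 2 * \<zeta>)))"
proof -
  obtain B R where B: "\<And>x. r x \<le> B" and R: "\<And>x. R < \<bar>x\<bar> \<Longrightarrow> r x = 0"
    using r_bdd r_supp by blast
  obtain \<kappa> where \<kappa>: "0 < \<kappa>" and bound: "\<And>k. k \<noteq> 0 \<Longrightarrow> cmod (fourier_hat r k) \<le> 1 - \<kappa> * min (k\<^sup>2) 1"
    using norm_fourier_hat_le_one_minus[OF r_nonneg B R r_int] by blast
  have \<zeta>: "0 \<le> \<zeta>"
    using C_pos d_lower d_le1 by (intro decay_exponent_nonneg[OF C_pos]) (meson order_trans)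
  have \<delta>_le: "\<delta> \<le> sup_norm_seq a"
    using a_ge[of 0] cSUP_upper[OF UNIV_I a_bdd] unfolding sup_norm_seq_def by (meson order_trans)
  show ?thesis
  proof (rule exI[of _ \<delta>], intro conjI allI impI)
    fix C0 assume C0: "0 < C0 \<and> C0 < \<delta>"
    show "\<exists>\<gamma>'>0. \<forall>s::int. s \<ge> 1 \<longrightarrow> A_quant r a d C0 s \<le> exp (- \<gamma>' * \<bar>real_of_int s\<bar> powr (- 2 * \<zeta>))"
      using A_quant_le_exp_decay[OF less_imp_le[OF \<kappa>] bound d_pos d_le1 d_lower less_imp_le[OF C_pos] \<zeta>]
        C0 \<delta>_le \<kappa> C_pos \<delta>_pos
      by (intro exI[of _ "\<kappa> / 32 * (C * C0 / sup_norm_seq a)\<^sup>2 * 2 powr (- 2 * \<zeta>)"]) auto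
  qed (rule \<delta>_pos)
qed

end
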